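(* For all integers $0\le k\le n$ and all $x$, \[ \sum_{j=0}^{n-k}\binom{n-k}{j}B_{j+k}(x)=\sum_{j=0}^{k}\binom{k}{j}(-1)^{j}B_{n-j}(x)+\big(nx-(n-k)\big)x^{n-k-1}(x-1)^{k-1}, \] where the last term is understood as the polynomial $\frac{d}{dx}\left[x^{n-k}(x-1)^k\right]$ (to which it is equal after cancellation, also in the cases $k=0$ or $k=n$).
   Context: The Bernoulli polynomials are defined by $\sum_{n\ge0}B_n(x)\frac{t^n}{n!}=\frac{te^{xt}}{e^t-1}$. *)

theory Defs
  imports "HOL-Computational_Algebra.Computational_Algebra"
begin

definition bernpoly :: "nat \<Rightarrow> real \<Rightarrow> real" where
  "bernpoly n x = fact n * fps_nth (fps_X * fps_exp x / (fps_exp 1 - 1)) n"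

end

theory Submission
  imports Defs
begin

(* Let U_x be the linear "umbral" functional on real polynomials that
   replaces every power t^i by the Bernoulli polynomial value B_i(x), i.e.
   U_x(p) = sum_i coeff p i * B_i(x).  The generating function identity
   G(t) * (e^t - 1) = t e^(xt) gives the binomial recurrence
   sum_i (n choose i) B_i(x) = B_n(x) + n x^(n-1), which says exactly that
   U_x(p(t+1)) - U_x(p(t)) = p'(x) for every monomial p = t^n, and hence, by
   linearity, for every polynomial p.
   Applying this to p(t) = t^(n-k) (t-1)^k, whose shift is p(t+1) = t^k (t+1)^(n-k),
   and reading off the coefficients of both polynomials by the binomial theorem
   yields the two Bernoulli sums of the theorem, and the difference is p'(x). *)

text \<open>Division of formal
  power series is only well behaved because both sides have subdegree 1.\<close>
lemma bernpoly_gf_times_denominator: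
  fixes x :: real
  shows "(fps_X * fps_exp x / (fps_exp 1 - 1)) * (fps_exp 1 - 1) = fps_X * fps_exp x"
proof -
  have denom: "subdegree (fps_exp (1::real) - 1) = 1"
    by (rule subdegreeI) auto
  have numer: "subdegree (fps_X * fps_exp x) = 1"
    by (rule subdegreeI) auto
  have nonzero: "fps_exp (1::real) - 1 \<noteq> 0"
    using denom by auto
  show ?thesis
    using fps_times_divide_eq[OF nonzero] denom numer by simp
qed

text \<open>The binomial recurrence of the Bernoulli polynomials, the coefficientwise form
  of G(t) e^t = G(t) + t e^(xt); it encodes B_n(x+1) - B_n(x) = n x^(n-1).\<close>
lemma bernpoly_binomial_sum:
  fixes x :: real
  shows "(\<Sum>i=0..n. real (n choose i) * bernpoly i x) = bernpoly n x + real n * x ^ (n - 1)"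
proof -
  define G where "G = fps_X * fps_exp x / (fps_exp 1 - 1)"
  have "G * fps_exp 1 = G + fps_X * fps_exp x"
    using bernpoly_gf_times_denominator[of x] unfolding G_def[symmetric]
    by (simp add: algebra_simps)
  then have "(G * fps_exp 1) $ n = (G + fps_X * fps_exp x) $ n"
    by simp
  moreover have "(G * fps_exp 1) $ n = (\<Sum>i=0..n. G $ i * (1 / fact (n - i)))"
    by (simp add: fps_mult_nth)
  moreover have "(fps_X * fps_exp x) $ n = (if n = 0 then 0 else x ^ (n - 1) / fact (n - 1))"
    by simp
  ultimately have coeffs: "(\<Sum>i=0..n. G $ i * (1 / fact (n - i)))
      = G $ n + (if n = 0 then 0 else x ^ (n - 1) / fact (n - 1))"
    by simp
  have "(\<Sum>i=0..n. real (n choose i) * bernpoly i x)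
      = fact n * (\<Sum>i=0..n. G $ i * (1 / fact (n - i)))"
    unfolding sum_distrib_left
  proof (rule sum.cong)
    fix i assume "i \<in> {0..n}"
    then have "i \<le> n" by simp
    then show "real (n choose i) * bernpoly i x = fact n * (G $ i * (1 / fact (n - i)))"
      unfolding bernpoly_def G_def[symmetric] binomial_fact[OF \<open>i \<le> n\<close>]
      by (simp add: field_simps)
  qed simp
  also have "\<dots> = bernpoly n x + real n * x ^ (n - 1)"
  proof (cases n)
    case 0
    then show ?thesis using coeffs by (simp add: bernpoly_def G_def)
  next
    case (Suc m)
    have "fact n * (x ^ (n - 1) / fact (n - 1)) = real n * x ^ (n - 1)"
      using Suc by (simp add: field_simps)
    then show ?thesis
      using coeffs Suc by (simp add: bernpoly_def G_def[symmetric] distrib_left)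
  qed
  finally show ?thesis .
qed

text \<open>The umbral Bernoulli functional: a polynomial of degree at most N is evaluated
  by replacing t^i with B_i(x).  The explicit bound N makes the functional linear.\<close>
definition umbral_bernpoly :: "real \<Rightarrow> nat \<Rightarrow> real poly \<Rightarrow> real" where
  "umbral_bernpoly x N p = (\<Sum>i\<le>N. coeff p i * bernpoly i x)"

lemma umbral_bernpoly_sum:
  "umbral_bernpoly x N (sum f A) = (\<Sum>a\<in>A. umbral_bernpoly x N (f a))"
  unfolding umbral_bernpoly_def coeff_sum sum_distrib_right by (rule sum.swap)

lemma umbral_bernpoly_support:
  assumes "S \<subseteq> {..N}" and "\<And>i. i \<le> N \<Longrightarrow> i \<notin> S \<Longrightarrow> coeff p i = 0"
  shows "umbral_bernpoly x N p = (\<Sum>i\<in>S. coeff p i * bernpoly i x)"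
  unfolding umbral_bernpoly_def
  by (rule sum.mono_neutral_right) (use assms in auto)

lemma pcompose_power: "pcompose (p ^ n) q = pcompose p q ^ n"
  by (induction n) (simp_all add: pcompose_mult one_pCons pcompose_pCons)

lemma pderiv_sum: "pderiv (sum f A) = (\<Sum>a\<in>A. pderiv (f a))"
  using higher_pderiv_sum[of 1 f A] by simp

text \<open>The shift lemma for a single monomial c t^i: the recurrence written umbrally,
  since (t+1)^i has the binomial coefficients as coefficients.\<close>
lemma umbral_bernpoly_shift_monom:
  assumes "i \<le> N"
  shows "umbral_bernpoly x N (pcompose (monom c i) [:1, 1:]) - umbral_bernpoly x N (monom c i)
       = poly (pderiv (monom c i)) x"
proof -
  have shifted: "pcompose (monom c i) [:1, 1:] = smult c ([:1, 1:] ^ i)"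
    by (simp add: monom_altdef pcompose_smult pcompose_power pcompose_pCons)
  have "umbral_bernpoly x N ([:1, 1:] ^ i) = (\<Sum>j\<in>{0..i}. coeff ([:1, 1:] ^ i) j * bernpoly j x)"
  proof (rule umbral_bernpoly_support)
    fix j assume "j \<notin> {0..i}"
    then have "degree ([:1, 1:] ^ i :: real poly) < j"
      using degree_power_le[of "[:1, 1:] :: real poly" i] by auto
    then show "coeff ([:1, 1:] ^ i :: real poly) j = 0"
      by (rule coeff_eq_0)
  qed (use assms in auto)
  also have "\<dots> = (\<Sum>j=0..i. real (i choose j) * bernpoly j x)"
    by (rule sum.cong) (auto simp: coeff_linear_poly_power)
  also have "\<dots> = bernpoly i x + real i * x ^ (i - 1)"
    by (rule bernpoly_binomial_sum)
  finally have "umbral_bernpoly x N (smult c ([:1, 1:] ^ i)) = c * (bernpoly i x + real i * x ^ (i - 1))"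
    by (simp add: umbral_bernpoly_def sum_distrib_left[symmetric] mult.assoc)
  moreover have "umbral_bernpoly x N (monom c i) = (\<Sum>j\<in>{i}. coeff (monom c i) j * bernpoly j x)"
    using assms by (intro umbral_bernpoly_support) (auto simp: coeff_monom)
  ultimately show ?thesis
    unfolding shifted by (simp add: pderiv_monom poly_monom algebra_simps)
qed

lemma umbral_bernpoly_shift:
  assumes "degree p \<le> N"
  shows "umbral_bernpoly x N (pcompose p [:1, 1:]) - umbral_bernpoly x N p = poly (pderiv p) x"
proof -
  have p: "p = (\<Sum>i\<le>N. monom (coeff p i) i)"
    using poly_as_sum_of_monoms'[OF assms] by simp
  have "umbral_bernpoly x N (pcompose p [:1, 1:]) - umbral_bernpoly x N p
      = (\<Sum>i\<le>N. umbral_bernpoly x N (pcompose (monom (coeff p i) i) [:1, 1:])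
                 - umbral_bernpoly x N (monom (coeff p i) i))"
    by (subst (1 2) p) (simp add: pcompose_sum umbral_bernpoly_sum sum_subtractf)
  also have "\<dots> = (\<Sum>i\<le>N. poly (pderiv (monom (coeff p i) i)) x)"
    by (rule sum.cong) (auto simp: umbral_bernpoly_shift_monom)
  also have "\<dots> = poly (pderiv p) x"
    by (subst (2) p) (simp add: pderiv_sum poly_sum)
  finally show ?thesis .
qed

lemma umbral_bernpoly_shifted_product:
  "umbral_bernpoly x (m + k) (monom 1 k * [:1, 1:] ^ m)
     = (\<Sum>j=0..m. real (m choose j) * bernpoly (j + k) x)"
proof -
  have "umbral_bernpoly x (m + k) (monom 1 k * [:1, 1:] ^ m)
      = (\<Sum>i\<in>{k..m + k}. coeff (monom 1 k * [:1, 1:] ^ m) i * bernpoly i x)"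
    by (rule umbral_bernpoly_support) (auto simp: coeff_monom_mult)
  also have "\<dots> = (\<Sum>j=0..m. real (m choose j) * bernpoly (j + k) x)"
    by (rule sum.reindex_bij_witness[where i="\<lambda>j. j + k" and j="\<lambda>i. i - k"])
       (auto simp: coeff_monom_mult coeff_linear_poly_power)
  finally show ?thesis .
qed

lemma umbral_bernpoly_product:
  "umbral_bernpoly x (m + k) (monom 1 m * [:-1, 1:] ^ k)
     = (\<Sum>j=0..k. real (k choose j) * (-1) ^ j * bernpoly (m + k - j) x)"
proof -
  let ?p = "monom 1 m * [:-1, 1:] ^ k :: real poly"
  have "umbral_bernpoly x (m + k) ?p = (\<Sum>i\<in>{m..m + k}. coeff ?p i * bernpoly i x)"
    by (rule umbral_bernpoly_support) (auto simp: coeff_monom_mult)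
  also have "\<dots> = (\<Sum>j=0..k. real (k choose j) * (-1) ^ j * bernpoly (m + k - j) x)"
  proof (rule sym, rule sum.reindex_bij_witness[where i="\<lambda>i. m + k - i" and j="\<lambda>j. m + k - j"])
    fix j assume "j \<in> {0..k}"
    then have "coeff ?p (m + k - j) = real (k choose j) * (-1) ^ j"
      by (simp add: coeff_monom_mult coeff_linear_poly_power binomial_symmetric[symmetric])
    then show "coeff ?p (m + k - j) * bernpoly (m + k - j) x
             = real (k choose j) * (-1) ^ j * bernpoly (m + k - j) x"
      by simp
  qed auto
  finally show ?thesis .
qed

theorem mainTheorem4:
  fixes n k :: nat and x :: real
  assumes "k \<le> n"
  shows "(\<Sum>j=0..n-k. real (n - k choose j) * bernpoly (j + k) x)
       = (\<Sum>j=0..k. real (k choose j) * (-1) ^ j * bernpoly (n - j) x)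
         + poly (pderiv ([:0, 1:] ^ (n - k) * [:-1, 1:] ^ k)) x"
proof -
  define m where "m = n - k"
  have n: "n = m + k"
    using assms m_def by simp
  define p :: "real poly" where "p = [:0, 1:] ^ m * [:-1, 1:] ^ k"
  have "degree p \<le> m + k"
    unfolding p_def
    by (rule order.trans[OF degree_mult_le]) (intro add_mono order.trans[OF degree_power_le]; simp)
  then have "umbral_bernpoly x (m + k) (pcompose p [:1, 1:]) - umbral_bernpoly x (m + k) p
           = poly (pderiv p) x"
    by (rule umbral_bernpoly_shift)
  moreover have "pcompose p [:1, 1:] = monom 1 k * [:1, 1:] ^ m"
    by (simp add: p_def pcompose_mult pcompose_power pcompose_pCons monom_altdef mult.commute)
  moreover have "p = monom 1 m * [:-1, 1:] ^ k"
    by (simp add: p_def monom_altdef)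
  ultimately show ?thesis
    using umbral_bernpoly_shifted_product[of x m k] umbral_bernpoly_product[of x m k]
    by (simp add: n p_def)
qed

end
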